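(* Let $q\ge5$ be a prime power and let $\mathcal{C}_\mathscr{C}$ be the $[q+1,q-3,5]_q$ code with parity check matrix whose columns are the vectors $(1,t,t^2,t^3)$, $t\in\mathbb{F}_q$, and $(0,0,0,1)$. The full weight distribution $(B_w(\mathcal{V}))_{0\le w\le q+1}$ of any coset $\mathcal{V}$ of $\mathcal{C}_\mathscr{C}$ is uniquely determined by the weight of $\mathcal{V}$ together with the number $B_3(\mathcal{V})$ of its weight-$3$ vectors; in particular, two cosets of the same weight with the same value of $B_3$ have identical weight distributions.
   Context: A coset of a linear code $\mathcal{C}\subseteq\mathbb{F}_q^n$ is a set $\mathbf{v}+\mathcal{C}$, $\mathbf{v}\in\mathbb{F}_q^n$; its weight is the minimum Hamming weight of its vectors; $B_w(\mathcal{V})$ denotes the number of vectors of Hamming weight $w$ in the coset $\mathcal{V}$. The cosets of $\mathcal{C}_\mathscr{C}$ have weight at most $3$. *)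

theory Defs
  imports Main
begin

text \<open>Coordinates of F_q^(q+1) are indexed by 'a option: Some t for t in F_q,
  None for the extra column (0,0,0,1).  Entry i (i = 0..3) of the parity-check
  column at position p.\<close>
definition pc_col :: "'a::field option \<Rightarrow> nat \<Rightarrow> 'a" where
  "pc_col p i = (case p of Some t \<Rightarrow> t ^ i | None \<Rightarrow> (if i = 3 then 1 else 0))"

definition hamming_wt :: "('b \<Rightarrow> 'a::zero) \<Rightarrow> nat" where
  "hamming_wt v = card {p. v p \<noteq> 0}"

definition code_CC :: "('a::{finite,field} option \<Rightarrow> 'a) set" where
  "code_CC = {v. \<forall>i<4. (\<Sum>p\<in>UNIV. v p * pc_col p i) = 0}"

definition coset_of :: "('b \<Rightarrow> 'a::plus) set \<Rightarrow> ('b \<Rightarrow> 'a) \<Rightarrow> ('b \<Rightarrow> 'a) set" where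
  "coset_of C v = {(\<lambda>p. v p + c p) | c. c \<in> C}"

definition cosets_of :: "('b \<Rightarrow> 'a::plus) set \<Rightarrow> ('b \<Rightarrow> 'a) set set" where
  "cosets_of C = {coset_of C v | v. True}"

definition coset_weight :: "('b \<Rightarrow> 'a::zero) set \<Rightarrow> nat" where
  "coset_weight V = Min (hamming_wt ` V)"

definition B_count :: "nat \<Rightarrow> ('b \<Rightarrow> 'a::zero) set \<Rightarrow> nat" where
  "B_count w V = card {x \<in> V. hamming_wt x = w}"

end

theory Submission
  imports Defs "HOL-Computational_Algebra.Polynomial"
begin

(* The code is MDS.  A nonzero codeword of weight at most 4 is orthogonal to the evaluation
   vector of every cubic, and the cubic vanishing on all but one finite support point gives a
   contradiction; so the minimum distance is 5.  Conversely, by a divided-difference identity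
   every 5 coordinates carry a codeword, so any q - 3 coordinates can be prescribed freely.
   Hence, for j <= q - 3 and a j-set J, a coset has exactly as many vectors vanishing on J as
   the code itself.  Double counting turns this into: sum_w C(q + 1 - w, j) B_w(V) does not
   depend on V.  This triangular system determines B_w for w >= 4 from B_0, ..., B_3, and
   B_0, B_1, B_2 are fixed by the coset weight because the minimum distance is 5. *)

lemma hamming_wt_le_card: "hamming_wt (x :: 'b::finite \<Rightarrow> 'a::zero) \<le> card (UNIV :: 'b set)"
  unfolding hamming_wt_def by (rule card_mono) auto

lemma card_zeros_eq: "card {p. (x :: 'b::finite \<Rightarrow> 'a::zero) p = 0} = card (UNIV :: 'b set) - hamming_wt x"
proof -
  have "{p. x p = 0} = UNIV - {p. x p \<noteq> 0}" by auto
  then show ?thesis unfolding hamming_wt_def by (simp add: card_Diff_subset)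
qed

lemma hamming_wt_diff_le:
  "hamming_wt (\<lambda>p::'b::finite. (x p :: 'a::ab_group_add) - y p) \<le> hamming_wt x + hamming_wt y"
proof -
  have "card {p. x p - y p \<noteq> 0} \<le> card ({p. x p \<noteq> 0} \<union> {p. y p \<noteq> 0})"
    by (intro card_mono) auto
  also have "\<dots> \<le> card {p. x p \<noteq> 0} + card {p. y p \<noteq> 0}" by (rule card_Un_le)
  finally show ?thesis unfolding hamming_wt_def .
qed

lemma B_count_eq_0:
  assumes "card (UNIV :: 'b set) < w"
  shows "B_count w (V :: ('b::finite \<Rightarrow> 'a::zero) set) = 0"
proof -
  have "hamming_wt x \<noteq> w" for x :: "'b \<Rightarrow> 'a"
    using hamming_wt_le_card[of x] assms by linarith
  then show ?thesis by (simp add: B_count_def)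
qed

lemma sum_hamming_wt_eq_sum_B_count:
  fixes V :: "('b::finite \<Rightarrow> 'a::zero) set"
  assumes "finite V"
  shows "(\<Sum>x\<in>V. f (hamming_wt x)) = (\<Sum>w\<le>card (UNIV :: 'b set). f w * B_count w V)"
proof -
  have "(\<Sum>x\<in>V. f (hamming_wt x))
      = (\<Sum>w\<le>card (UNIV :: 'b set). \<Sum>x\<in>{x\<in>V. hamming_wt x = w}. f (hamming_wt x))"
    using assms by (intro sum.group[symmetric]) (auto simp: hamming_wt_le_card)
  also have "\<dots> = (\<Sum>w\<le>card (UNIV :: 'b set). f w * B_count w V)"
    by (simp add: B_count_def mult.commute)
  finally show ?thesis .
qed

lemma sum_card_vanishing_eq_sum_choose:
  fixes V :: "('b::finite \<Rightarrow> 'a::zero) set"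
  assumes "finite V"
  shows "(\<Sum>J\<in>{J. card J = j}. card {x\<in>V. \<forall>p\<in>J. x p = 0}) = (\<Sum>x\<in>V. card {p. x p = 0} choose j)"
proof -
  have "(\<Sum>J\<in>{J. card J = j}. card {x\<in>V. \<forall>p\<in>J. x p = 0})
      = (\<Sum>J\<in>{J. card J = j}. \<Sum>x\<in>V. of_bool (J \<subseteq> {p. x p = 0}))"
    using assms by (intro sum.cong refl) (simp add: Int_def subset_iff Ball_def)
  also have "\<dots> = (\<Sum>x\<in>V. \<Sum>J\<in>{J. card J = j}. of_bool (J \<subseteq> {p. x p = 0}))"
    by (rule sum.swap)
  also have "\<dots> = (\<Sum>x\<in>V. card {J. J \<subseteq> {p. x p = 0} \<and> card J = j})"
    by (intro sum.cong refl) (simp add: Int_def conj_commute)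
  also have "\<dots> = (\<Sum>x\<in>V. card {p. x p = 0} choose j)"
    by (simp add: n_subsets)
  finally show ?thesis .
qed

lemma sum_binomial_B_count:
  fixes V :: "('b::finite \<Rightarrow> 'a::zero) set"
  assumes "finite V"
  shows "(\<Sum>w\<le>card (UNIV :: 'b set). (card (UNIV :: 'b set) - w choose j) * B_count w V)
    = (\<Sum>J\<in>{J. card J = j}. card {x\<in>V. \<forall>p\<in>J. x p = 0})"
  using assms by (simp add: sum_card_vanishing_eq_sum_choose card_zeros_eq
      sum_hamming_wt_eq_sum_B_count[symmetric])

lemma binomial_moments_determine:
  fixes f g :: "nat \<Rightarrow> nat"
  assumes vanish: "\<And>w. n < w \<Longrightarrow> f w = 0" "\<And>w. n < w \<Longrightarrow> g w = 0"
    and low: "\<And>w. w < r \<Longrightarrow> f w = g w"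
    and moments: "\<And>j. j + r \<le> n \<Longrightarrow>
      (\<Sum>w\<le>n. (n - w choose j) * f w) = (\<Sum>w\<le>n. (n - w choose j) * g w)"
  shows "f w = g w"
proof (induction w rule: less_induct)
  case (less w)
  \<comment> \<open>The moment with \<open>j = n - w\<close> involves only \<open>f 0, ..., f w\<close>, the last with
    coefficient 1.\<close>
  consider "w < r" | "n < w" | "r \<le> w" "w \<le> n" by linarith
  then show ?case
  proof cases
    case 3
    have split: "(\<Sum>w'\<le>n. (n - w' choose (n - w)) * h w') = (\<Sum>w'<w. (n - w' choose (n - w)) * h w') + h w"
      for h :: "nat \<Rightarrow> nat"
    proof -
      define F where "F w' = (n - w' choose (n - w)) * h w'" for w'
      have "{..n} = insert w ({..<w} \<union> {w<..n})" using 3 by auto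
      then have "(\<Sum>w'\<le>n. F w') = F w + (\<Sum>w'\<in>{..<w} \<union> {w<..n}. F w')"
        by simp
      also have "\<dots> = F w + (\<Sum>w'<w. F w') + (\<Sum>w'\<in>{w<..n}. F w')"
        by (subst sum.union_disjoint) auto
      finally have "(\<Sum>w'\<le>n. F w') = F w + (\<Sum>w'<w. F w') + (\<Sum>w'\<in>{w<..n}. F w')" .
      moreover have "(\<Sum>w'\<in>{w<..n}. F w') = 0"
        by (intro sum.neutral) (auto simp: F_def)
      ultimately show ?thesis by (simp add: F_def)
    qed
    have "(\<Sum>w'<w. (n - w' choose (n - w)) * f w') = (\<Sum>w'<w. (n - w' choose (n - w)) * g w')"
      using less.IH by simp
    with moments[of "n - w"] 3 show ?thesis by (simp add: split)
  qed (use vanish low in auto)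
qed

lemma mem_coset_of_iff:
  fixes C :: "('b \<Rightarrow> 'a::ab_group_add) set"
  shows "x \<in> coset_of C v \<longleftrightarrow> (\<lambda>p. x p - v p) \<in> C"
proof
  assume "x \<in> coset_of C v"
  then obtain c where "c \<in> C" "x = (\<lambda>p. v p + c p)" by (auto simp: coset_of_def)
  then show "(\<lambda>p. x p - v p) \<in> C" by simp
next
  assume "(\<lambda>p. x p - v p) \<in> C"
  then show "x \<in> coset_of C v"
    unfolding coset_of_def by (auto intro!: exI[of _ "\<lambda>p. x p - v p"])
qed

locale additive_code =
  fixes C :: "('b::finite \<Rightarrow> 'a::{ab_group_add,finite}) set"
  assumes zero_mem: "(\<lambda>_. 0) \<in> C"
    and diff_mem: "c \<in> C \<Longrightarrow> c' \<in> C \<Longrightarrow> (\<lambda>p. c p - c' p) \<in> C"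
begin

lemma self_mem_coset: "v \<in> coset_of C v"
  by (simp add: mem_coset_of_iff zero_mem)

lemma coset_diff_mem:
  assumes "x \<in> coset_of C v" "y \<in> coset_of C v"
  shows "(\<lambda>p. x p - y p) \<in> C"
  using diff_mem[of "\<lambda>p. x p - v p" "\<lambda>p. y p - v p"] assms by (simp add: mem_coset_of_iff)

lemma card_coset_vanishing:
  assumes x0: "x0 \<in> coset_of C v" "\<forall>p\<in>J. x0 p = 0"
  shows "card {x \<in> coset_of C v. \<forall>p\<in>J. x p = 0} = card {c \<in> C. \<forall>p\<in>J. c p = 0}"
proof -
  have "{x \<in> coset_of C v. \<forall>p\<in>J. x p = 0} = (\<lambda>c p. x0 p - c p) ` {c \<in> C. \<forall>p\<in>J. c p = 0}"
  proof (intro equalityI subsetI)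
    fix x assume x: "x \<in> {x \<in> coset_of C v. \<forall>p\<in>J. x p = 0}"
    then have "(\<lambda>p. x0 p - x p) \<in> {c \<in> C. \<forall>p\<in>J. c p = 0}"
      using x0 coset_diff_mem by auto
    then show "x \<in> (\<lambda>c p. x0 p - c p) ` {c \<in> C. \<forall>p\<in>J. c p = 0}"
      by (rule image_eqI[rotated]) simp
  next
    fix x assume "x \<in> (\<lambda>c p. x0 p - c p) ` {c \<in> C. \<forall>p\<in>J. c p = 0}"
    then obtain c where c: "c \<in> C" "\<forall>p\<in>J. c p = 0" and x: "x = (\<lambda>p. x0 p - c p)" by blast
    have "(\<lambda>p. (x0 p - v p) - c p) \<in> C"
      using diff_mem c x0 by (simp add: mem_coset_of_iff)
    then show "x \<in> {x \<in> coset_of C v. \<forall>p\<in>J. x p = 0}"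
      using c x0 by (simp add: x mem_coset_of_iff algebra_simps)
  qed
  moreover have "inj_on (\<lambda>c p. x0 p - c p) X" for X
    by (auto simp: inj_on_def fun_eq_iff)
  ultimately show ?thesis by (simp add: card_image)
qed

lemma coset_eq_if_wt_sum_lt:
  assumes dist: "\<And>c. c \<in> C \<Longrightarrow> hamming_wt c < d \<Longrightarrow> c = (\<lambda>_. 0)"
    and x: "x \<in> coset_of C v" and y: "y \<in> coset_of C v"
    and wt: "hamming_wt x + hamming_wt y < d"
  shows "x = y"
proof -
  have "hamming_wt (\<lambda>p. x p - y p) < d"
    using hamming_wt_diff_le[of x y] wt by linarith
  then have "(\<lambda>p. x p - y p) = (\<lambda>_. 0)"
    using dist coset_diff_mem[OF x y] by blast
  then show ?thesis by (simp add: fun_eq_iff)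
qed

lemma B_count_coset_small:
  assumes dist: "\<And>c. c \<in> C \<Longrightarrow> hamming_wt c < d \<Longrightarrow> c = (\<lambda>_. 0)"
    and w: "2 * w < d"
  shows "B_count w (coset_of C v) = (if w = coset_weight (coset_of C v) then 1 else 0)"
proof -
  let ?V = "coset_of C v"
  obtain x0 where x0: "x0 \<in> ?V" "hamming_wt x0 = coset_weight ?V"
    using Min_in[of "hamming_wt ` ?V"] self_mem_coset unfolding coset_weight_def by fastforce
  have min: "coset_weight ?V \<le> hamming_wt x" if "x \<in> ?V" for x
    unfolding coset_weight_def using that by simp
  have "{x \<in> ?V. hamming_wt x = w} \<subseteq> {x0}"
  proof
    fix x assume x: "x \<in> {x \<in> ?V. hamming_wt x = w}"
    then have "hamming_wt x + hamming_wt x0 < d"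
      using min[of x] x0 w by auto
    then show "x \<in> {x0}"
      using coset_eq_if_wt_sum_lt[OF dist _ x0(1)] x by auto
  qed
  then have "{x \<in> ?V. hamming_wt x = w} = (if w = coset_weight ?V then {x0} else {})"
    using x0 by auto
  then show ?thesis by (simp add: B_count_def)
qed

lemma B_count_cosets_eq:
  assumes onto: "\<And>J y. card J + r \<le> card (UNIV :: 'b set) \<Longrightarrow> \<exists>c\<in>C. \<forall>p\<in>J. c p = y p"
    and V: "V \<in> cosets_of C" and W: "W \<in> cosets_of C"
    and low: "\<And>w. w < r \<Longrightarrow> B_count w V = B_count w W"
  shows "B_count w V = B_count w W"
proof -
  let ?n = "card (UNIV :: 'b set)"
  have moment: "(\<Sum>w\<le>?n. (?n - w choose j) * B_count w U)
      = (\<Sum>J\<in>{J. card J = j}. card {c \<in> C. \<forall>p\<in>J. c p = 0})"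
    if U: "U \<in> cosets_of C" and j: "j + r \<le> ?n" for U j
  proof -
    obtain u where u: "U = coset_of C u" using U by (auto simp: cosets_of_def)
    have fibre: "card {x \<in> U. \<forall>p\<in>J. x p = 0} = card {c \<in> C. \<forall>p\<in>J. c p = 0}"
      if J: "card J = j" for J
    proof -
      obtain c0 where "c0 \<in> C" "\<forall>p\<in>J. c0 p = - u p"
        using onto[of J "\<lambda>p. - u p"] J j by auto
      then have "(\<lambda>p. u p + c0 p) \<in> U" "\<forall>p\<in>J. u p + c0 p = 0"
        by (auto simp: u mem_coset_of_iff)
      then show ?thesis unfolding u by (rule card_coset_vanishing)
    qed
    have "(\<Sum>w\<le>?n. (?n - w choose j) * B_count w U)
        = (\<Sum>J\<in>{J. card J = j}. card {x \<in> U. \<forall>p\<in>J. x p = 0})"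
      by (rule sum_binomial_B_count) simp
    also have "\<dots> = (\<Sum>J\<in>{J. card J = j}. card {c \<in> C. \<forall>p\<in>J. c p = 0})"
      by (rule sum.cong) (auto simp: fibre)
    finally show ?thesis .
  qed
  show ?thesis
    by (rule binomial_moments_determine[where n = ?n and r = r])
      (use B_count_eq_0 low moment[OF V] moment[OF W] in auto)
qed

end

lemma degree_prod_linear: "degree (\<Prod>u\<in>B. [:- u, 1:] :: 'a::idom poly) = card B"
  by (subst degree_prod_sum_eq) auto

(* Compare the coefficients of X^(card T - 1) in X^i and in its Lagrange interpolant on T. *)
lemma sum_power_div_prod_diff:
  fixes T :: "'a::field set"
  assumes T: "finite T" and i: "i < card T"
  shows "(\<Sum>t\<in>T. t ^ i / (\<Prod>u\<in>T - {t}. t - u)) = (if Suc i = card T then 1 else 0)"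
proof -
  define L where "L = (\<Sum>t\<in>T. smult (t ^ i / (\<Prod>u\<in>T - {t}. t - u)) (\<Prod>u\<in>T - {t}. [:- u, 1:]))"
  have deg_basis: "degree (\<Prod>u\<in>T - {t}. [:- u, 1:]) = card T - 1" if "t \<in> T" for t
    using that T by (simp add: degree_prod_linear)
  have lead_basis: "coeff (\<Prod>u\<in>T - {t}. [:- u, 1:]) (card T - 1) = 1" if "t \<in> T" for t
    using deg_basis[OF that] lead_coeff_prod[of "\<lambda>u. [:- u, 1:]" "T - {t}"] by simp
  have "poly L s = s ^ i" if s: "s \<in> T" for s
  proof -
    have "poly L s = (\<Sum>t\<in>T. t ^ i / (\<Prod>u\<in>T - {t}. t - u) * (\<Prod>u\<in>T - {t}. s - u))"
      by (simp add: L_def poly_sum poly_prod)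
    also have "\<dots> = s ^ i / (\<Prod>u\<in>T - {s}. s - u) * (\<Prod>u\<in>T - {s}. s - u)"
      using T s by (subst sum.remove[of _ s]) (auto intro!: sum.neutral simp: prod_zero_iff)
    also have "\<dots> = s ^ i"
      using T by simp
    finally show ?thesis .
  qed
  moreover have "degree L < card T"
    unfolding L_def using i deg_basis
    by (intro degree_sum_less) (auto intro: le_less_trans[OF degree_smult_le])
  ultimately have "L = monom 1 i"
    using i by (intro poly_eqI_degree[of T]) (auto simp: poly_monom degree_monom_eq)
  then have "coeff L (card T - 1) = coeff (monom 1 i) (card T - 1)" by simp
  moreover have "coeff L (card T - 1) = (\<Sum>t\<in>T. t ^ i / (\<Prod>u\<in>T - {t}. t - u))"
    unfolding L_def coeff_sum coeff_smult
    by (intro sum.cong refl) (simp add: lead_basis[simplified])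
  ultimately show ?thesis using i by (auto split: if_split_asm)
qed

lemma sum_UNIV_option:
  "(\<Sum>p\<in>UNIV. f p) = f None + (\<Sum>t\<in>UNIV. f (Some (t :: 'a::finite)))"
  by (simp add: UNIV_option_conv sum.reindex)

lemma mem_code_CC_iff:
  "c \<in> code_CC \<longleftrightarrow> (\<forall>i<4. (\<Sum>t\<in>UNIV. c (Some t) * t ^ i) + (if i = 3 then c None else 0) = 0)"
  by (simp add: code_CC_def sum_UNIV_option pc_col_def add.commute)

interpretation code_CC: additive_code "code_CC :: ('a::{finite,field} option \<Rightarrow> 'a) set"
proof
  show "(\<lambda>_. 0) \<in> (code_CC :: ('a option \<Rightarrow> 'a) set)"
    by (simp add: code_CC_def)
  fix c c' :: "'a option \<Rightarrow> 'a"
  assume "c \<in> code_CC" "c' \<in> code_CC"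
  then show "(\<lambda>p. c p - c' p) \<in> code_CC"
    by (simp add: code_CC_def left_diff_distrib sum_subtractf)
qed

lemma code_CC_lincomb:
  assumes "\<And>j. j \<in> J \<Longrightarrow> e j \<in> code_CC"
  shows "(\<lambda>p. \<Sum>j\<in>J. f j * e j p) \<in> (code_CC :: ('a::{finite,field} option \<Rightarrow> 'a) set)"
  unfolding code_CC_def
proof (intro CollectI allI impI)
  fix i :: nat assume i: "i < 4"
  have "(\<Sum>p\<in>UNIV. (\<Sum>j\<in>J. f j * e j p) * pc_col p i)
      = (\<Sum>p\<in>UNIV. \<Sum>j\<in>J. f j * (e j p * pc_col p i))"
    by (simp add: sum_distrib_right mult.assoc)
  also have "\<dots> = (\<Sum>j\<in>J. f j * (\<Sum>p\<in>UNIV. e j p * pc_col p i))"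
    by (subst sum.swap) (simp add: sum_distrib_left)
  also have "\<dots> = 0" using assms i by (simp add: code_CC_def)
  finally show "(\<Sum>p\<in>UNIV. (\<Sum>j\<in>J. f j * e j p) * pc_col p i) = 0" .
qed

lemma code_CC_orthogonal_poly:
  assumes c: "c \<in> code_CC" and g: "degree g \<le> 3"
  shows "(\<Sum>t\<in>UNIV. c (Some t) * poly g t) + c None * coeff g 3 = 0"
proof -
  define G where "G p = (\<Sum>i<4. coeff g i * pc_col p i)" for p
  have "(\<Sum>p\<in>UNIV. c p * G p) = (\<Sum>p\<in>UNIV. \<Sum>i<4. coeff g i * (c p * pc_col p i))"
    by (simp add: G_def sum_distrib_left mult_ac)
  also have "\<dots> = (\<Sum>i<4. coeff g i * (\<Sum>p\<in>UNIV. c p * pc_col p i))"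
    by (subst sum.swap) (simp add: sum_distrib_left)
  also have "\<dots> = 0" using c by (simp add: code_CC_def)
  finally have "(\<Sum>p\<in>UNIV. c p * G p) = 0" .
  moreover have "G None = coeff g 3"
    by (simp add: G_def pc_col_def numeral_eq_Suc lessThan_Suc)
  moreover have "G (Some t) = poly g t" for t
  proof -
    have "poly g t = (\<Sum>i\<le>degree g. coeff g i * t ^ i)" by (rule poly_altdef)
    also have "\<dots> = (\<Sum>i<4. coeff g i * t ^ i)"
      by (rule sum.mono_neutral_left) (use g in \<open>auto intro: coeff_eq_0\<close>)
    finally show ?thesis by (simp add: G_def pc_col_def)
  qed
  ultimately show ?thesis by (simp add: sum_UNIV_option add.commute mult.commute)
qed

lemma code_CC_min_wt:
  assumes c: "c \<in> code_CC" and wt: "hamming_wt c < 5"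
  shows "c = (\<lambda>_. 0)"
proof -
  have Some_zero: "c (Some a) = 0" for a
  proof (rule ccontr)
    \<comment> \<open>Test \<open>c\<close> against the cubic vanishing at the other finite points of its support.\<close>
    assume ca: "c (Some a) \<noteq> 0"
    define B where "B = {u. u \<noteq> a \<and> c (Some u) \<noteq> 0}"
    define g where "g = (\<Prod>u\<in>B. [:- u, 1:])"
    have "card (Some ` insert a B) = card (insert a B)"
      by (rule card_image) (simp add: inj_on_def)
    also have "\<dots> = Suc (card B)"
      by (simp add: B_def)
    finally have card_aB: "card (Some ` insert a B) = Suc (card B)" .
    have "Some ` insert a B \<subseteq> {p. c p \<noteq> 0}" by (auto simp: B_def ca)
    then have "card (Some ` insert a B) \<le> hamming_wt c"
      unfolding hamming_wt_def by (rule card_mono[rotated]) simp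
    then have deg_g: "degree g \<le> 3"
      using wt card_aB by (simp add: g_def degree_prod_linear)
    have "c None * coeff g 3 = 0"
    proof (cases "c None = 0")
      case False
      then have "insert None (Some ` insert a B) \<subseteq> {p. c p \<noteq> 0}" by (auto simp: B_def ca)
      then have "card (insert None (Some ` insert a B)) \<le> hamming_wt c"
        unfolding hamming_wt_def by (rule card_mono[rotated]) simp
      then have "degree g < 3"
        using wt card_aB by (simp add: g_def degree_prod_linear)
      then show ?thesis by (simp add: coeff_eq_0)
    qed simp
    moreover have "(\<Sum>t\<in>UNIV. c (Some t) * poly g t) = c (Some a) * poly g a"
      by (subst sum.remove[of _ a]) (auto intro!: sum.neutral simp: g_def poly_prod B_def prod_zero_iff)
    moreover have "poly g a \<noteq> 0"
      by (simp add: g_def poly_prod prod_zero_iff B_def)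
    ultimately show False
      using code_CC_orthogonal_poly[OF c deg_g] ca by auto
  qed
  have "c None = 0"
    using code_CC_orthogonal_poly[OF c, of "monom 1 3"] Some_zero by (simp add: degree_monom_eq)
  show ?thesis
  proof
    fix p show "c p = 0" using Some_zero \<open>c None = 0\<close> by (cases p) auto
  qed
qed

lemma code_CC_codeword_with_support:
  fixes P :: "'a::{finite,field} option set"
  assumes P: "card P = 5"
  shows "\<exists>e\<in>code_CC. {p. e p \<noteq> 0} = P"
proof -
  define T where "T = {t. Some t \<in> P}"
  \<comment> \<open>By \<open>sum_power_div_prod_diff\<close> the weights kill \<open>t^i\<close> for \<open>i < card T - 1\<close>; when
    \<open>card T = 4\<close>, the row \<open>i = 3\<close> is balanced by the coordinate at \<open>None\<close>.\<close>
  define e where "e p = (case p of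
      None \<Rightarrow> if None \<in> P then -1 else 0
    | Some t \<Rightarrow> if t \<in> T then inverse (\<Prod>u\<in>T - {t}. t - u) else 0)" for p
  have "Some ` T = P - {None}"
  proof (rule set_eqI)
    fix x show "x \<in> Some ` T \<longleftrightarrow> x \<in> P - {None}" by (cases x) (auto simp: T_def)
  qed
  then have card_T: "card T = (if None \<in> P then 4 else 5)"
    using P card_image[of Some T] by (simp add: card_Diff_singleton_if split: if_split_asm)
  have "e \<in> code_CC"
    unfolding mem_code_CC_iff
  proof (intro allI impI)
    fix i :: nat assume i: "i < 4"
    have "(\<Sum>t\<in>UNIV. e (Some t) * t ^ i) = (\<Sum>t\<in>T. e (Some t) * t ^ i)"
      by (rule sum.mono_neutral_right) (auto simp: e_def)
    also have "\<dots> = (\<Sum>t\<in>T. t ^ i / (\<Prod>u\<in>T - {t}. t - u))"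
      by (rule sum.cong) (auto simp: e_def divide_inverse)
    also have "\<dots> = (if Suc i = card T then 1 else 0)"
      by (rule sum_power_div_prod_diff) (use i card_T in auto)
    finally show "(\<Sum>t\<in>UNIV. e (Some t) * t ^ i) + (if i = 3 then e None else 0) = 0"
      using i card_T by (auto simp: e_def)
  qed
  moreover have "{p. e p \<noteq> 0} = P"
  proof (rule set_eqI)
    fix p show "p \<in> {p. e p \<noteq> 0} \<longleftrightarrow> p \<in> P"
      by (cases p) (auto simp: e_def T_def prod_zero_iff)
  qed
  ultimately show ?thesis by blast
qed

lemma code_CC_restriction_onto:
  fixes J :: "'a::{finite,field} option set" and y :: "'a option \<Rightarrow> 'a"
  assumes J: "card J + 4 \<le> card (UNIV :: 'a option set)"
  shows "\<exists>c\<in>code_CC. \<forall>p\<in>J. c p = y p"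
proof -
  have "4 \<le> card (UNIV - J)"
    using J by (simp add: card_Diff_subset)
  then obtain S where S: "S \<subseteq> UNIV - J" "card S = 4"
    by (rule obtain_subset_with_card_n)
  have "\<exists>e\<in>code_CC. {p. e p \<noteq> 0} = insert j S" if "j \<in> J" for j
  proof (rule code_CC_codeword_with_support)
    have "j \<notin> S" "finite S" using S that by auto
    then show "card (insert j S) = 5" using S by simp
  qed
  then obtain e where e: "\<And>j. j \<in> J \<Longrightarrow> e j \<in> code_CC \<and> {p. e j p \<noteq> 0} = insert j S"
    by metis
  define c where "c = (\<lambda>p. \<Sum>j\<in>J. y j / e j j * e j p)"
  have "c \<in> code_CC"
    unfolding c_def by (rule code_CC_lincomb) (use e in blast)
  moreover have "c p = y p" if p: "p \<in> J" for p
  proof -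
    have "e j p = 0" if "j \<in> J - {p}" for j
      using e[of j] S p that by auto
    then have "c p = y p / e p p * e p p"
      unfolding c_def using p by (subst sum.remove[of _ p]) auto
    moreover have "e p p \<noteq> 0"
      using e[OF p] by auto
    ultimately show ?thesis by simp
  qed
  ultimately show ?thesis by blast
qed

theorem theorem3p5:
  fixes V W :: "('a::{finite,field} option \<Rightarrow> 'a) set"
  assumes "card (UNIV :: 'a set) \<ge> 5"
    and "V \<in> cosets_of code_CC" and "W \<in> cosets_of code_CC"
    and "coset_weight V = coset_weight W"
    and "B_count 3 V = B_count 3 W"
  shows "\<forall>w. B_count w V = B_count w W"
proof -
  obtain v u where V: "V = coset_of code_CC v" and W: "W = coset_of code_CC u"
    using assms(2,3) by (auto simp: cosets_of_def)
  have "B_count w V = B_count w W" if "w < 4" for w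
  proof (cases "w = 3")
    case False
    then have "2 * w < 5" using that by simp
    then have "B_count w (coset_of code_CC x) = (if w = coset_weight (coset_of code_CC x) then 1 else 0)"
      for x :: "'a option \<Rightarrow> 'a"
      by (intro code_CC.B_count_coset_small[where d = 5]) (use code_CC_min_wt in auto)
    then show ?thesis using V W assms(4) by simp
  qed (use assms(5) in simp)
  then show ?thesis
    using code_CC.B_count_cosets_eq[OF code_CC_restriction_onto assms(2,3)] by blast
qed

end
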